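(* Let $q>3$ and $n\ge 1$. Suppose there exists a local permutation polynomial $f\in\mathbb{F}_q[x_1,\dots,x_n]$ of degree $n(q-2)$. Then, for every $1\le m\le n$, there exists a local permutation polynomial in $\mathbb{F}_q[x_1,\dots,x_m]$ of degree $m(q-2)$.
   Context: $\mathbb{F}_q$ is the finite field with $q$ elements. A polynomial $f\in\mathbb{F}_q[x_1,\dots,x_n]$ is a local permutation polynomial (LPP) if, for each $i$ and each choice of the other coordinates $(a_j)_{j\ne i}\in\mathbb{F}_q^{n-1}$, the univariate polynomial obtained by fixing $x_j=a_j$ for $j\ne i$ induces a bijection of $\mathbb{F}_q$. Polynomials are reduced (degree $<q$ in each variable), and degree means total degree. For $q>3$ any LPP in $n$ variables has degree at most $n(q-2)$, which is the "maximum degree". *)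

theory Defs
  imports Main
begin

text \<open>Reduced polynomials in n variables x_0..x_(n-1) over a finite field 'a with q = card (UNIV :: 'a set)
elements are represented by their coefficient function on exponent vectors
(nat => nat), supported on exponent vectors e with e i < q for i < n and e i = 0 for i >= n.\<close>

definition red_exps :: "nat \<Rightarrow> nat \<Rightarrow> (nat \<Rightarrow> nat) set" where
  "red_exps q n = {e. (\<forall>i<n. e i < q) \<and> (\<forall>i\<ge>n. e i = 0)}"

definition is_reduced_poly :: "nat \<Rightarrow> ((nat \<Rightarrow> nat) \<Rightarrow> 'a::{field,finite}) \<Rightarrow> bool" where
  "is_reduced_poly n c \<longleftrightarrow> (\<forall>e. c e \<noteq> 0 \<longrightarrow> e \<in> red_exps (card (UNIV :: 'a set)) n)"

definition mpeval :: "nat \<Rightarrow> ((nat \<Rightarrow> nat) \<Rightarrow> 'a::{field,finite}) \<Rightarrow> (nat \<Rightarrow> 'a) \<Rightarrow> 'a" where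
  "mpeval n c x = (\<Sum>e\<in>red_exps (card (UNIV :: 'a set)) n. c e * (\<Prod>i<n. x i ^ e i))"

text \<open>Total degree (the zero polynomial gets degree 0 by convention).\<close>
definition tdeg :: "nat \<Rightarrow> ((nat \<Rightarrow> nat) \<Rightarrow> 'a::{field,finite}) \<Rightarrow> nat" where
  "tdeg n c = Max (insert 0 {(\<Sum>i<n. e i) | e. e \<in> red_exps (card (UNIV :: 'a set)) n \<and> c e \<noteq> 0})"

definition is_LPP :: "nat \<Rightarrow> ((nat \<Rightarrow> nat) \<Rightarrow> 'a::{field,finite}) \<Rightarrow> bool" where
  "is_LPP n c \<longleftrightarrow> is_reduced_poly n c \<and>
     (\<forall>i<n. \<forall>x::nat \<Rightarrow> 'a. bij (\<lambda>t. mpeval n c (x(i := t))))"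

end

theory Submission
  imports Defs "HOL-Computational_Algebra.Polynomial"
begin

(* The coefficient of x_i^(q-1) in a local permutation polynomial f vanishes: summing f along a
   line in direction x_i gives the sum of all field elements, which is 0, whereas the power sums
   of the field vanish in every exponent below q - 1 and equal -1 in exponent q - 1.  So every
   exponent in f is at most q - 2, and degree n(q - 2) forces the monomial (x_0 ... x_(n-1))^(q-2)
   to occur.  Substituting for the last variable a constant that keeps the coefficient of
   (x_0 ... x_(n-2))^(q-2) nonzero preserves the local permutation property in the remaining
   variables and gives degree (n - 1)(q - 2); iterate. *)

lemma card_UNIV_field_ge_2: "2 \<le> card (UNIV :: 'a::{field,finite} set)"
proof -
  have "card {0, 1::'a} \<le> card (UNIV :: 'a set)"
    by (rule card_mono) auto
  thus ?thesis by simp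
qed

lemma of_nat_card_UNIV_eq_0: "of_nat (card (UNIV :: 'a::{field,finite} set)) = (0::'a)"
proof -
  have "(\<Sum>t::'a\<in>UNIV. t + 1) = (\<Sum>t\<in>UNIV. t)"
    by (rule sum.reindex_bij_witness[of _ "\<lambda>t. t - 1" "\<lambda>t. t + 1"]) auto
  thus ?thesis by (simp add: sum.distrib)
qed

lemma power_card_UNIV_minus_1:
  fixes t :: "'a::{field,finite}"
  assumes "t \<noteq> 0"
  shows "t ^ (card (UNIV :: 'a set) - 1) = 1"
proof -
  let ?U = "UNIV - {0::'a}"
  have "(\<Prod>u\<in>?U. t * u) = (\<Prod>u\<in>?U. u)"
    by (rule prod.reindex_bij_witness[of _ "\<lambda>u. u / t" "\<lambda>u. t * u"]) (use assms in auto)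
  moreover have "card ?U = card (UNIV :: 'a set) - 1"
    by (simp add: card_Diff_singleton)
  ultimately show ?thesis
    by (simp add: prod.distrib)
qed

lemma exists_power_ne_1:
  assumes "0 < s" and "s < card (UNIV :: 'a::{field,finite} set) - 1"
  shows "\<exists>c::'a. c \<noteq> 0 \<and> c ^ s \<noteq> 1"
proof (rule ccontr)
  define p :: "'a poly" where "p = monom 1 s - 1"
  assume "\<not> ?thesis"
  hence roots: "UNIV - {0} \<subseteq> {c. poly p c = 0}"
    by (auto simp: p_def poly_monom)
  have "coeff p s = 1"
    using assms(1) by (simp add: p_def)
  hence "p \<noteq> 0" by auto
  have "card (UNIV - {0::'a}) \<le> card {c. poly p c = 0}"
    using roots poly_roots_finite[OF \<open>p \<noteq> 0\<close>] by (rule card_mono[rotated])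
  also have "\<dots> \<le> degree p"
    using \<open>p \<noteq> 0\<close> by (rule card_poly_roots_bound)
  also have "\<dots> \<le> s"
    unfolding p_def by (rule degree_diff_le) (auto intro: degree_monom_le)
  finally show False
    using assms(2) by (simp add: card_Diff_singleton)
qed

lemma sum_power_eq_0:
  assumes "s < card (UNIV :: 'a::{field,finite} set) - 1"
  shows "(\<Sum>t::'a\<in>UNIV. t ^ s) = 0"
proof (cases "s = 0")
  case True
  thus ?thesis by (simp add: of_nat_card_UNIV_eq_0)
next
  case False
  then obtain c :: 'a where c: "c \<noteq> 0" "c ^ s \<noteq> 1"
    using exists_power_ne_1 assms by blast
  have "(\<Sum>t::'a\<in>UNIV. (c * t) ^ s) = (\<Sum>t\<in>UNIV. t ^ s)"
    by (rule sum.reindex_bij_witness[of _ "\<lambda>t. t / c" "\<lambda>t. c * t"]) (use c in auto)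
  hence "c ^ s * (\<Sum>t::'a\<in>UNIV. t ^ s) = (\<Sum>t\<in>UNIV. t ^ s)"
    by (simp add: power_mult_distrib sum_distrib_left mult.commute)
  hence "(c ^ s - 1) * (\<Sum>t::'a\<in>UNIV. t ^ s) = 0"
    by (simp add: algebra_simps)
  thus ?thesis
    using c(2) by simp
qed

lemma sum_power_card_UNIV_minus_1:
  "(\<Sum>t::'a::{field,finite}\<in>UNIV. t ^ (card (UNIV :: 'a set) - 1)) = -1"
proof -
  have q: "2 \<le> card (UNIV :: 'a set)"
    by (rule card_UNIV_field_ge_2)
  have "(\<Sum>t::'a\<in>UNIV. t ^ (card (UNIV :: 'a set) - 1)) = (\<Sum>t\<in>UNIV - {0::'a}. 1)"
    by (intro sum.mono_neutral_cong_right) (use q power_card_UNIV_minus_1 in auto)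
  also have "\<dots> = of_nat (card (UNIV :: 'a set)) - 1"
    using q by (simp add: card_Diff_singleton)
  finally show ?thesis
    by (simp add: of_nat_card_UNIV_eq_0)
qed

lemma coeff_eq_0_if_vanishes:
  fixes a :: "nat \<Rightarrow> 'a::{field,finite}"
  assumes vanish: "\<And>t. (\<Sum>j<d. a j * t ^ j) = 0"
    and "d \<le> card (UNIV :: 'a set)" and "k < d"
  shows "a k = 0"
proof -
  define p where "p = (\<Sum>j<d. monom (a j) j)"
  have "p = 0"
  proof (rule ccontr)
    assume "p \<noteq> 0"
    have "{t. poly p t = 0} = UNIV"
      using vanish by (simp add: p_def poly_sum poly_monom)
    hence "card (UNIV :: 'a set) \<le> degree p"
      using card_poly_roots_bound[OF \<open>p \<noteq> 0\<close>] by simp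
    also have "degree p \<le> d - 1"
      unfolding p_def by (rule degree_sum_le) (auto intro: order.trans[OF degree_monom_le])
    finally show False
      using assms(2,3) by simp
  qed
  hence "coeff p k = 0" by simp
  thus ?thesis
    using assms(3) by (simp add: p_def coeff_sum)
qed

lemma finite_red_exps: "finite (red_exps q n)"
proof -
  have "finite {e. \<forall>i. (i \<in> {..<n} \<longrightarrow> e i \<in> {..<q}) \<and> (i \<notin> {..<n} \<longrightarrow> e i = 0)}"
    by (rule finite_set_of_finite_funs) auto
  thus ?thesis
    unfolding red_exps_def by (rule rev_finite_subset) auto
qed

lemma bij_betw_red_exps_fun_upd:
  assumes "i < n"
  shows "bij_betw (\<lambda>(e, k). e(i := k)) ({e \<in> red_exps q n. e i = 0} \<times> {..<q}) (red_exps q n)"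
  by (rule bij_betw_byWitness[where f' = "\<lambda>e. (e(i := 0), e i)"])
    (use assms in \<open>auto simp: red_exps_def fun_upd_idem\<close>)

definition var_coeff ::
    "nat \<Rightarrow> ((nat \<Rightarrow> nat) \<Rightarrow> 'a::{field,finite}) \<Rightarrow> nat \<Rightarrow> nat \<Rightarrow> (nat \<Rightarrow> nat) \<Rightarrow> 'a" where
  "var_coeff n c i k e =
     (if e \<in> red_exps (card (UNIV :: 'a set)) n \<and> e i = 0 then c (e(i := k)) else 0)"

lemma var_coeff_fun_upd_0:
  fixes c :: "(nat \<Rightarrow> nat) \<Rightarrow> 'a::{field,finite}"
  assumes "e \<in> red_exps (card (UNIV :: 'a set)) n"
  shows "var_coeff n c i (e i) (e(i := 0)) = c e"
  using assms by (auto simp: var_coeff_def red_exps_def)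

lemma is_reduced_poly_var_coeff: "is_reduced_poly n (var_coeff n c i k)"
  by (simp add: is_reduced_poly_def var_coeff_def)

lemma is_reduced_poly_var_coeff_last:
  fixes c :: "(nat \<Rightarrow> nat) \<Rightarrow> 'a::{field,finite}"
  shows "is_reduced_poly m (var_coeff (Suc m) c m k)"
  by (auto simp: is_reduced_poly_def var_coeff_def red_exps_def Suc_le_eq le_eq_less_or_eq)
    (metis Suc_lessI)

lemma prod_power_fun_upd:
  fixes x :: "nat \<Rightarrow> 'a::comm_monoid_mult"
  assumes "i < n" and "e i = 0"
  shows "(\<Prod>j<n. (x(i := t)) j ^ (e(i := k)) j) = t ^ k * (\<Prod>j<n. x j ^ e j)"
proof -
  have i: "i \<in> {..<n}" using assms(1) by simp
  have "(\<Prod>j<n. (x(i := t)) j ^ (e(i := k)) j) = t ^ k * (\<Prod>j\<in>{..<n} - {i}. x j ^ e j)"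
    by (simp add: prod.remove[OF _ i])
  also have "\<dots> = t ^ k * (\<Prod>j<n. x j ^ e j)"
    using assms(2) by (simp add: prod.remove[OF _ i])
  finally show ?thesis .
qed

lemma mpeval_var_coeff:
  fixes c :: "(nat \<Rightarrow> nat) \<Rightarrow> 'a::{field,finite}"
  shows "mpeval n (var_coeff n c i k) x =
    (\<Sum>e\<in>{e \<in> red_exps (card (UNIV :: 'a set)) n. e i = 0}. c (e(i := k)) * (\<Prod>j<n. x j ^ e j))"
  unfolding mpeval_def
  by (rule sum.mono_neutral_cong_right) (auto simp: finite_red_exps var_coeff_def)

lemma mpeval_fun_upd:
  fixes c :: "(nat \<Rightarrow> nat) \<Rightarrow> 'a::{field,finite}"
  assumes "i < n"
  shows "mpeval n c (x(i := t)) =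
    (\<Sum>k<card (UNIV :: 'a set). t ^ k * mpeval n (var_coeff n c i k) x)"
proof -
  let ?q = "card (UNIV :: 'a set)"
  let ?Z = "{e \<in> red_exps ?q n. e i = 0}"
  let ?P = "\<lambda>y e. \<Prod>j<n. y j ^ e j"
  have "mpeval n c (x(i := t)) = (\<Sum>(e, k)\<in>?Z \<times> {..<?q}. c (e(i := k)) * ?P (x(i := t)) (e(i := k)))"
    unfolding mpeval_def
    by (subst sum.reindex_bij_betw[OF bij_betw_red_exps_fun_upd[OF assms], symmetric])
      (simp add: case_prod_unfold)
  also have "\<dots> = (\<Sum>(e, k)\<in>?Z \<times> {..<?q}. t ^ k * (c (e(i := k)) * ?P x e))"
    by (intro sum.cong refl) (auto simp: prod_power_fun_upd[OF assms] simp del: fun_upd_apply)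
  also have "\<dots> = (\<Sum>k<?q. t ^ k * (\<Sum>e\<in>?Z. c (e(i := k)) * ?P x e))"
    by (simp add: sum.cartesian_product[symmetric] sum.swap[of _ ?Z] sum_distrib_left)
  finally show ?thesis
    by (simp add: mpeval_var_coeff)
qed

lemma mpeval_linear:
  "mpeval n (\<lambda>e. \<Sum>k\<in>K. w k * c k e) x = (\<Sum>k\<in>K. w k * mpeval n (c k) x)"
  unfolding mpeval_def
  by (simp add: sum_distrib_left sum_distrib_right mult.assoc sum.swap[of _ K])

lemma mpeval_Suc:
  fixes c :: "(nat \<Rightarrow> nat) \<Rightarrow> 'a::{field,finite}"
  assumes "is_reduced_poly m c"
  shows "mpeval (Suc m) c x = mpeval m c x"
proof -
  let ?q = "card (UNIV :: 'a set)"
  have "red_exps ?q m \<subseteq> red_exps ?q (Suc m)"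
    by (auto simp: red_exps_def less_Suc_eq card_gt_0_iff)
  hence "mpeval (Suc m) c x = (\<Sum>e\<in>red_exps ?q m. c e * (\<Prod>j<Suc m. x j ^ e j))"
    unfolding mpeval_def
    by (intro sum.mono_neutral_right) (use assms in \<open>auto simp: finite_red_exps is_reduced_poly_def\<close>)
  thus ?thesis
    by (simp add: mpeval_def red_exps_def)
qed

lemma mpeval_var_coeff_eq_0:
  fixes c :: "(nat \<Rightarrow> nat) \<Rightarrow> 'a::{field,finite}"
  assumes "i < n" and "k < card (UNIV :: 'a set)" and "\<And>t. mpeval n c (x(i := t)) = 0"
  shows "mpeval n (var_coeff n c i k) x = 0"
proof -
  have "(\<Sum>k<card (UNIV :: 'a set). mpeval n (var_coeff n c i k) x * t ^ k) = 0" for t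
    using mpeval_fun_upd[OF assms(1), of c x t] assms(3)[of t] by (simp add: mult.commute)
  thus ?thesis
    by (rule coeff_eq_0_if_vanishes) (use assms(2) in simp_all)
qed

lemma reduced_poly_eq_0_if_mpeval_eq_0:
  fixes c :: "(nat \<Rightarrow> nat) \<Rightarrow> 'a::{field,finite}"
  assumes "is_reduced_poly n c" and "\<And>x. mpeval n c x = 0"
  shows "c = (\<lambda>_. 0)"
  using assms
proof (induction n arbitrary: c)
  case 0
  have "red_exps (card (UNIV :: 'a set)) 0 = {\<lambda>_. 0}"
    by (auto simp: red_exps_def)
  hence "c (\<lambda>_. 0) = 0"
    using "0.prems"(2) by (simp add: mpeval_def)
  moreover have "e = (\<lambda>_. 0)" if "c e \<noteq> 0" for e
    using "0.prems"(1) that by (auto simp: is_reduced_poly_def red_exps_def)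
  ultimately show ?case
    by fastforce
next
  case (Suc m)
  let ?q = "card (UNIV :: 'a set)"
  have "c e = 0" for e
  proof (cases "e \<in> red_exps ?q (Suc m)")
    case True
    hence "c e = var_coeff (Suc m) c m (e m) (e(m := 0))"
      by (simp add: var_coeff_fun_upd_0)
    also have "var_coeff (Suc m) c m (e m) = (\<lambda>_. 0)"
    proof (rule Suc.IH[OF is_reduced_poly_var_coeff_last])
      show "mpeval m (var_coeff (Suc m) c m (e m)) x = 0" for x
        using mpeval_var_coeff_eq_0[of m "Suc m" "e m" c x] True Suc.prems(2)
        by (simp add: red_exps_def mpeval_Suc is_reduced_poly_var_coeff_last)
    qed
    finally show ?thesis by simp
  next
    case False
    thus ?thesis
      using Suc.prems(1) by (auto simp: is_reduced_poly_def)
  qed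
  thus ?case by blast
qed

lemma LPP_top_var_coeff_vanishes:
  fixes f :: "(nat \<Rightarrow> nat) \<Rightarrow> 'a::{field,finite}"
  assumes "2 < card (UNIV :: 'a set)" and "is_LPP n f" and "i < n"
  shows "mpeval n (var_coeff n f i (card (UNIV :: 'a set) - 1)) x = 0"
proof -
  let ?q = "card (UNIV :: 'a set)"
  let ?M = "\<lambda>k. mpeval n (var_coeff n f i k) x"
  have "bij (\<lambda>t. mpeval n f (x(i := t)))"
    using assms(2,3) by (simp add: is_LPP_def)
  hence "(\<Sum>t\<in>UNIV. mpeval n f (x(i := t))) = (\<Sum>t::'a\<in>UNIV. t ^ 1)"
    using sum.reindex_bij_betw[of _ UNIV UNIV "\<lambda>t. t"] by simp
  also have "\<dots> = 0"
    using assms(1) by (intro sum_power_eq_0) simp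
  finally have "0 = (\<Sum>t\<in>UNIV. mpeval n f (x(i := t)))" ..
  also have "\<dots> = (\<Sum>k<?q. ?M k * (\<Sum>t::'a\<in>UNIV. t ^ k))"
    by (simp add: mpeval_fun_upd[OF assms(3)] sum.swap[of _ UNIV] sum_distrib_right mult.commute)
  also have "\<dots> = (\<Sum>k\<in>insert (?q - 1) {..<?q - 1}. ?M k * (\<Sum>t::'a\<in>UNIV. t ^ k))"
    using assms(1) by (intro sum.cong refl) auto
  also have "\<dots> = - ?M (?q - 1)"
    using sum_power_card_UNIV_minus_1[where 'a = 'a] by (simp add: sum_power_eq_0)
  finally show ?thesis by simp
qed

lemma LPP_exponent_le:
  fixes f :: "(nat \<Rightarrow> nat) \<Rightarrow> 'a::{field,finite}"
  assumes "2 < card (UNIV :: 'a set)" and "is_LPP n f" and "i < n" and "f e \<noteq> 0"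
  shows "e i \<le> card (UNIV :: 'a set) - 2"
proof -
  let ?q = "card (UNIV :: 'a set)"
  have e: "e \<in> red_exps ?q n"
    using assms(2,4) by (auto simp: is_LPP_def is_reduced_poly_def)
  have "var_coeff n f i (?q - 1) = (\<lambda>_. 0)"
    using assms(1-3)
    by (intro reduced_poly_eq_0_if_mpeval_eq_0[of n] is_reduced_poly_var_coeff LPP_top_var_coeff_vanishes)
  hence "e i \<noteq> ?q - 1"
    using assms(4) var_coeff_fun_upd_0[OF e, of f i] by auto
  moreover have "e i < ?q"
    using e assms(3) by (simp add: red_exps_def)
  ultimately show ?thesis by linarith
qed

lemma LPP_monomial_degree_le:
  fixes f :: "(nat \<Rightarrow> nat) \<Rightarrow> 'a::{field,finite}"
  assumes "2 < card (UNIV :: 'a set)" and "is_LPP n f" and "f e \<noteq> 0"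
  shows "(\<Sum>i<n. e i) \<le> n * (card (UNIV :: 'a set) - 2)"
proof -
  have "e i \<le> card (UNIV :: 'a set) - 2" if "i < n" for i
    by (rule LPP_exponent_le[where f = f and e = e, OF assms(1,2) that assms(3)])
  hence "(\<Sum>i<n. e i) \<le> (\<Sum>i<n. card (UNIV :: 'a set) - 2)"
    by (intro sum_mono) simp
  thus ?thesis by simp
qed

lemma tdeg_attained:
  fixes f :: "(nat \<Rightarrow> nat) \<Rightarrow> 'a::{field,finite}"
  assumes "0 < tdeg n f"
  obtains e where "e \<in> red_exps (card (UNIV :: 'a set)) n" and "f e \<noteq> 0"
    and "(\<Sum>i<n. e i) = tdeg n f"
proof -
  let ?S = "{(\<Sum>i<n. e i) | e. e \<in> red_exps (card (UNIV :: 'a set)) n \<and> f e \<noteq> 0}"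
  have "finite ?S"
    by (rule finite_image_set) (simp add: finite_red_exps)
  hence "tdeg n f \<in> insert 0 ?S"
    unfolding tdeg_def by (intro Max_in) auto
  thus ?thesis
    using assms that by auto
qed

lemma tdeg_eqI:
  fixes f :: "(nat \<Rightarrow> nat) \<Rightarrow> 'a::{field,finite}"
  assumes "e \<in> red_exps (card (UNIV :: 'a set)) n" and "f e \<noteq> 0" and "(\<Sum>i<n. e i) = d"
    and "\<And>e'. e' \<in> red_exps (card (UNIV :: 'a set)) n \<Longrightarrow> f e' \<noteq> 0 \<Longrightarrow> (\<Sum>i<n. e' i) \<le> d"
  shows "tdeg n f = d"
proof -
  let ?S = "{(\<Sum>i<n. e i) | e. e \<in> red_exps (card (UNIV :: 'a set)) n \<and> f e \<noteq> 0}"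
  have "finite ?S"
    by (rule finite_image_set) (simp add: finite_red_exps)
  thus ?thesis
    unfolding tdeg_def by (intro Max_eqI) (use assms in auto)
qed

definition max_exps :: "nat \<Rightarrow> nat \<Rightarrow> nat \<Rightarrow> nat" where
  "max_exps q n i = (if i < n then q - 2 else 0)"

lemma LPP_max_degree_coeff_ne_0:
  fixes f :: "(nat \<Rightarrow> nat) \<Rightarrow> 'a::{field,finite}"
  assumes "2 < card (UNIV :: 'a set)" and "is_LPP n f"
    and "tdeg n f = n * (card (UNIV :: 'a set) - 2)" and "0 < n"
  shows "f (max_exps (card (UNIV :: 'a set)) n) \<noteq> 0"
proof -
  let ?q = "card (UNIV :: 'a set)"
  have "0 < tdeg n f"
    using assms(1,3,4) by simp
  then obtain e where e: "e \<in> red_exps ?q n" "f e \<noteq> 0" "(\<Sum>i<n. e i) = tdeg n f"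
    by (rule tdeg_attained)
  have le: "e i \<le> ?q - 2" if "i < n" for i
    by (rule LPP_exponent_le[where f = f and e = e, OF assms(1,2) that e(2)])
  have "(\<Sum>i<n. (?q - 2) - e i) = 0"
    using sum_subtractf_nat[of "{..<n}" e "\<lambda>_. ?q - 2"] le e(3) assms(3) by simp
  hence "(?q - 2) - e i = 0" if "i < n" for i
    using that by (simp only: sum_eq_0_iff finite_lessThan lessThan_iff)
  hence all_max: "e i = ?q - 2" if "i < n" for i
    using le[OF that] that by fastforce
  have "e = max_exps ?q n"
  proof
    fix i
    show "e i = max_exps ?q n i"
      using all_max[of i] e(1) by (auto simp: max_exps_def red_exps_def)
  qed
  thus ?thesis
    using e(2) by simp
qed

definition subst_last ::
    "nat \<Rightarrow> ((nat \<Rightarrow> nat) \<Rightarrow> 'a::{field,finite}) \<Rightarrow> 'a \<Rightarrow> (nat \<Rightarrow> nat) \<Rightarrow> 'a" where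
  "subst_last m f a = (\<lambda>e. \<Sum>k<card (UNIV :: 'a set). a ^ k * var_coeff (Suc m) f m k e)"

lemma is_reduced_poly_subst_last: "is_reduced_poly m (subst_last m f a)"
  unfolding is_reduced_poly_def
proof (intro allI impI)
  fix e
  assume "subst_last m f a e \<noteq> 0"
  then obtain k where "a ^ k * var_coeff (Suc m) f m k e \<noteq> 0"
    unfolding subst_last_def by (rule sum.not_neutral_contains_not_neutral)
  hence "var_coeff (Suc m) f m k e \<noteq> 0"
    by simp
  thus "e \<in> red_exps (card (UNIV :: 'a set)) m"
    using is_reduced_poly_var_coeff_last[of m f k] by (simp add: is_reduced_poly_def)
qed

lemma mpeval_subst_last: "mpeval m (subst_last m f a) x = mpeval (Suc m) f (x(m := a))"
proof -
  have "mpeval m (subst_last m f a) x = mpeval (Suc m) (subst_last m f a) x"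
    by (simp add: mpeval_Suc is_reduced_poly_subst_last)
  also have "\<dots> = (\<Sum>k<card (UNIV :: 'a set). a ^ k * mpeval (Suc m) (var_coeff (Suc m) f m k) x)"
    unfolding subst_last_def by (rule mpeval_linear)
  also have "\<dots> = mpeval (Suc m) f (x(m := a))"
    by (simp add: mpeval_fun_upd)
  finally show ?thesis .
qed

lemma subst_last_apply:
  fixes f :: "(nat \<Rightarrow> nat) \<Rightarrow> 'a::{field,finite}"
  assumes "e \<in> red_exps (card (UNIV :: 'a set)) m"
  shows "subst_last m f a e = (\<Sum>k<card (UNIV :: 'a set). f (e(m := k)) * a ^ k)"
  using assms by (auto simp: subst_last_def var_coeff_def red_exps_def less_Suc_eq mult.commute
      intro!: sum.cong)

lemma is_LPP_subst_last:
  assumes "is_LPP (Suc m) f"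
  shows "is_LPP m (subst_last m f a)"
  unfolding is_LPP_def
proof (intro conjI allI impI is_reduced_poly_subst_last)
  fix i x
  assume "i < m"
  hence "(\<lambda>t. mpeval m (subst_last m f a) (x(i := t))) = (\<lambda>t. mpeval (Suc m) f ((x(m := a))(i := t)))"
    by (simp add: mpeval_subst_last fun_upd_twist)
  moreover have "bij (\<lambda>t. mpeval (Suc m) f ((x(m := a))(i := t)))"
    using assms \<open>i < m\<close> by (simp add: is_LPP_def)
  ultimately show "bij (\<lambda>t. mpeval m (subst_last m f a) (x(i := t)))"
    by simp
qed

lemma LPP_max_degree_drop_last:
  fixes f :: "(nat \<Rightarrow> nat) \<Rightarrow> 'a::{field,finite}"
  assumes "2 < card (UNIV :: 'a set)" and "is_LPP (Suc m) f"
    and "tdeg (Suc m) f = Suc m * (card (UNIV :: 'a set) - 2)"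
  shows "\<exists>g :: (nat \<Rightarrow> nat) \<Rightarrow> 'a. is_LPP m g \<and> tdeg m g = m * (card (UNIV :: 'a set) - 2)"
proof -
  let ?q = "card (UNIV :: 'a set)"
  let ?E = "max_exps ?q m"
  have "?E(m := ?q - 2) = max_exps ?q (Suc m)"
    by (auto simp: max_exps_def less_Suc_eq)
  hence "f (?E(m := ?q - 2)) \<noteq> 0"
    using LPP_max_degree_coeff_ne_0[OF assms] by simp
  have "\<exists>a. (\<Sum>k<?q. f (?E(m := k)) * a ^ k) \<noteq> 0"
  proof (rule ccontr)
    assume "\<nexists>a. (\<Sum>k<?q. f (?E(m := k)) * a ^ k) \<noteq> 0"
    hence "f (?E(m := ?q - 2)) = 0"
      by (intro coeff_eq_0_if_vanishes[of "\<lambda>k. f (?E(m := k))" ?q]) (use assms(1) in auto)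
    with \<open>f (?E(m := ?q - 2)) \<noteq> 0\<close> show False ..
  qed
  then obtain a where a: "(\<Sum>k<?q. f (?E(m := k)) * a ^ k) \<noteq> 0" ..
  have "is_LPP m (subst_last m f a)"
    using assms(2) by (rule is_LPP_subst_last)
  moreover have "tdeg m (subst_last m f a) = m * (?q - 2)"
  proof (rule tdeg_eqI[of ?E])
    show "?E \<in> red_exps ?q m" and "subst_last m f a ?E \<noteq> 0"
      using assms(1) a by (simp_all add: max_exps_def red_exps_def subst_last_apply)
    show "(\<Sum>i<m. ?E i) = m * (?q - 2)"
      by (simp add: max_exps_def)
    show "(\<Sum>i<m. e i) \<le> m * (?q - 2)" if "subst_last m f a e \<noteq> 0" for e
      using LPP_monomial_degree_le[where f = "subst_last m f a" and e = e]
        assms(1) \<open>is_LPP m (subst_last m f a)\<close> that .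
  qed
  ultimately show ?thesis
    by (intro exI[of _ "subst_last m f a"] conjI)
qed

lemma LPP_max_degree_restrict:
  fixes f :: "(nat \<Rightarrow> nat) \<Rightarrow> 'a::{field,finite}"
  assumes "2 < card (UNIV :: 'a set)" and "is_LPP n f"
    and "tdeg n f = n * (card (UNIV :: 'a set) - 2)" and "m \<le> n"
  shows "\<exists>g :: (nat \<Rightarrow> nat) \<Rightarrow> 'a. is_LPP m g \<and> tdeg m g = m * (card (UNIV :: 'a set) - 2)"
  using assms(2-4)
proof (induction n arbitrary: f)
  case 0
  thus ?case
    by (intro exI[of _ f]) simp
next
  case (Suc n)
  show ?case
  proof (cases "m = Suc n")
    case True
    thus ?thesis
      using Suc.prems(1,2) by (intro exI[of _ f]) simp
  next
    case False
    obtain g :: "(nat \<Rightarrow> nat) \<Rightarrow> 'a"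
      where "is_LPP n g" and "tdeg n g = n * (card (UNIV :: 'a set) - 2)"
      using LPP_max_degree_drop_last[OF assms(1) Suc.prems(1,2)] by blast
    thus ?thesis
      using Suc.IH False Suc.prems(3) by simp
  qed
qed

theorem mainTheorem10:
  fixes f :: "(nat \<Rightarrow> nat) \<Rightarrow> 'a::{field,finite}"
    and n :: nat
  assumes "card (UNIV :: 'a set) > 3"
    and "n \<ge> 1"
    and "is_LPP n f"
    and "tdeg n f = n * (card (UNIV :: 'a set) - 2)"
  shows "\<forall>m. 1 \<le> m \<and> m \<le> n \<longrightarrow>
           (\<exists>g :: (nat \<Rightarrow> nat) \<Rightarrow> 'a. is_LPP m g \<and> tdeg m g = m * (card (UNIV :: 'a set) - 2))"
  using LPP_max_degree_restrict[OF _ assms(3,4)] assms(1) by auto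

end
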